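(* Let $g\ge2$, let $q_i(x,y)=a_ix^2+2b_ixy+c_iy^2$ ($i=1,\ldots,g$) be integer binary quadratic forms, irreducible over the integers, with $a_i\equiv1\pmod4$, and with $D:=\prod_{p\le2g}p\prod_k a_kc_k\delta_k\prod_{i<j}\operatorname{Res}(q_i,q_j)\neq0$. Let $p$ be prime, $e_1,\ldots,e_g\ge0$ integers, and $\sigma\in S_g$ with $e_{\sigma(1)}\le\cdots\le e_{\sigma(g)}$. Then $$\rho(p^{e_1},\ldots,p^{e_g})\ll(e_{\sigma(g)}-e_{\sigma(g-1)}+1)\,p^{2e_{\sigma(1)}+\cdots+2e_{\sigma(g-1)}+e_{\sigma(g)}}.$$ Also $$\rho(p,\ldots,p)=\rho^*(p,\ldots,p)+p^{2(g-1)}=p^{2(g-1)}+O(p),$$ and for all but finitely many primes $p$, for each $n=1,\ldots,g$ one has $\rho(p^{\alpha_1},\ldots,p^{\alpha_g})\le2p$ where $\alpha_i=1$ if $i=n$ and $\alpha_i=0$ otherwise. Implied constants depend only on the forms.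
   Context: $\delta_k$ is the discriminant of $q_k$, $\operatorname{Res}$ the resultant. For positive integers $d_1,\ldots,d_g$: $\Lambda_{\mathbf d}:=\{\mathbf x\in\mathbb Z^2:d_i\mid q_i(\mathbf x)\ \forall i\}$, $\rho(\mathbf d):=\#(\Lambda_{\mathbf d}\cap[0,d_1\cdots d_g)^2)$, $\Lambda^*_{\mathbf d}:=\{\mathbf x\in\Lambda_{\mathbf d}:\gcd(x_1,x_2,d_1\cdots d_g)=1\}$, $\rho^*(\mathbf d):=\#(\Lambda^*_{\mathbf d}\cap[0,d_1\cdots d_g)^2)$. *)

theory Defs
  imports "HOL-Combinatorics.Permutations" "HOL-Computational_Algebra.Primes" "HOL-Number_Theory.Cong" Complex_Main
begin

definition qform :: "int \<Rightarrow> int \<Rightarrow> int \<Rightarrow> int \<Rightarrow> int \<Rightarrow> int" where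
  "qform a b c x y = a * x^2 + 2 * b * x * y + c * y^2"

definition disc_form :: "int \<Rightarrow> int \<Rightarrow> int \<Rightarrow> int" where
  "disc_form a b c = (2 * b)^2 - 4 * a * c"

text \<open>Resultant of the binary quadratic forms a1 x^2 + B1 x y + c1 y^2 and
  a2 x^2 + B2 x y + c2 y^2 (Sylvester determinant), with B = 2 b.\<close>
definition res_form :: "int \<Rightarrow> int \<Rightarrow> int \<Rightarrow> int \<Rightarrow> int \<Rightarrow> int \<Rightarrow> int" where
  "res_form a1 b1 c1 a2 b2 c2 =
     (a1 * c2 - a2 * c1)^2 - (a1 * (2*b2) - a2 * (2*b1)) * ((2*b1) * c2 - (2*b2) * c1)"

text \<open>Irreducibility of the form in Z[x,y]: a factorisation of a homogeneous quadratic
  into non-units is either a non-unit constant times a form, or a product of two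
  integer linear forms.\<close>
definition irreducible_form :: "int \<Rightarrow> int \<Rightarrow> int \<Rightarrow> bool" where
  "irreducible_form a b c \<longleftrightarrow>
     gcd (gcd a (2 * b)) c = 1 \<and>
     \<not> (\<exists>r s t u :: int. \<forall>x y. qform a b c x y = (r * x + s * y) * (t * x + u * y))"

definition rho :: "nat \<Rightarrow> (nat \<Rightarrow> int) \<Rightarrow> (nat \<Rightarrow> int) \<Rightarrow> (nat \<Rightarrow> int) \<Rightarrow> (nat \<Rightarrow> nat) \<Rightarrow> nat" where
  "rho g a b c d =
     (let P = (\<Prod>i\<in>{1..g}. int (d i)) in
      card {(x1::int, x2::int). 0 \<le> x1 \<and> x1 < P \<and> 0 \<le> x2 \<and> x2 < P \<and>
              (\<forall>i\<in>{1..g}. int (d i) dvd qform (a i) (b i) (c i) x1 x2)})"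

definition rho_star :: "nat \<Rightarrow> (nat \<Rightarrow> int) \<Rightarrow> (nat \<Rightarrow> int) \<Rightarrow> (nat \<Rightarrow> int) \<Rightarrow> (nat \<Rightarrow> nat) \<Rightarrow> nat" where
  "rho_star g a b c d =
     (let P = (\<Prod>i\<in>{1..g}. int (d i)) in
      card {(x1::int, x2::int). 0 \<le> x1 \<and> x1 < P \<and> 0 \<le> x2 \<and> x2 < P \<and>
              (\<forall>i\<in>{1..g}. int (d i) dvd qform (a i) (b i) (c i) x1 x2) \<and>
              gcd (gcd x1 x2) P = 1})"

end

theory Submission
  imports Defs
begin

(*
  All counts are counts of points of a square box [0, N)^2 subject to congruences.  For a single
  form q = (a, b, c), a point whose coordinates have exact common p-power p^k is p^k times a
  primitive point; after possibly swapping coordinates p does not divide y2, and then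
  y1 = t y2 modulo p^j for a root t of a t^2 + 2 b t + c.  A Hensel-type splitting around one root
  bounds the number of roots modulo p^j by |disc| (1 + |a|), which gives O(p^(2E - M)) points
  with p^M | q.  For two forms, the homogeneous Bezout identities R x^3, R y^3 in (q_1, q_2) show
  that a primitive common zero modulo p^m forces p^m | R; hence only O(e_f - e_h + 1) values of k
  contribute when rho is bounded through the two largest exponents e_f >= e_h.  At a single
  prime the same identities make rho^* vanish unless p | R, while the points divisible by p
  contribute exactly p^(2(g-1)).
*)

section \<open>Lattice points in a square box\<close>

definition box_pairs :: "int \<Rightarrow> (int \<Rightarrow> int \<Rightarrow> bool) \<Rightarrow> (int \<times> int) set" where
  "box_pairs N P = {(x1, x2). 0 \<le> x1 \<and> x1 < N \<and> 0 \<le> x2 \<and> x2 < N \<and> P x1 x2}"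

lemma box_pairs_subset: "box_pairs N P \<subseteq> {0..<N} \<times> {0..<N}"
  by (auto simp: box_pairs_def)

lemma finite_box_pairs [simp]: "finite (box_pairs N P)"
  using box_pairs_subset by (rule finite_subset) simp

lemma card_box_pairs_mono:
  "(\<And>x1 x2. P x1 x2 \<Longrightarrow> Q x1 x2) \<Longrightarrow> card (box_pairs N P) \<le> card (box_pairs N Q)"
  by (intro card_mono finite_box_pairs) (auto simp: box_pairs_def)

lemma card_box_pairs_le:
  assumes "N \<ge> 0"
  shows "int (card (box_pairs N P)) \<le> N^2"
proof -
  have "card (box_pairs N P) \<le> nat N * nat N"
    using card_mono[OF _ box_pairs_subset, of N P] by (simp add: card_cartesian_product)
  then have "int (card (box_pairs N P)) \<le> int (nat N * nat N)" by (rule of_nat_mono)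
  then show ?thesis using assms by (simp add: power2_eq_square)
qed

lemma card_box_pairs_split:
  "card (box_pairs N P) =
     card (box_pairs N (\<lambda>x1 x2. P x1 x2 \<and> \<not> Q x1 x2)) + card (box_pairs N (\<lambda>x1 x2. P x1 x2 \<and> Q x1 x2))"
proof -
  have "box_pairs N P =
      box_pairs N (\<lambda>x1 x2. P x1 x2 \<and> \<not> Q x1 x2) \<union> box_pairs N (\<lambda>x1 x2. P x1 x2 \<and> Q x1 x2)"
    by (auto simp: box_pairs_def)
  also have "card \<dots> =
      card (box_pairs N (\<lambda>x1 x2. P x1 x2 \<and> \<not> Q x1 x2)) + card (box_pairs N (\<lambda>x1 x2. P x1 x2 \<and> Q x1 x2))"
    by (rule card_Un_disjoint[OF finite_box_pairs finite_box_pairs]) (auto simp: box_pairs_def)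
  finally show ?thesis .
qed

lemma rho_eq_card_box_pairs:
  "rho g a b c d = card (box_pairs (\<Prod>i\<in>{1..g}. int (d i))
     (\<lambda>x1 x2. \<forall>i\<in>{1..g}. int (d i) dvd qform (a i) (b i) (c i) x1 x2))"
  unfolding rho_def box_pairs_def Let_def by (rule refl)

lemma rho_star_eq_card_box_pairs:
  "rho_star g a b c d = card (box_pairs (\<Prod>i\<in>{1..g}. int (d i))
     (\<lambda>x1 x2. (\<forall>i\<in>{1..g}. int (d i) dvd qform (a i) (b i) (c i) x1 x2) \<and>
              gcd (gcd x1 x2) (\<Prod>i\<in>{1..g}. int (d i)) = 1))"
  unfolding rho_star_def box_pairs_def Let_def by (rule refl)

section \<open>Congruences modulo prime powers\<close>

lemma prime_power_dvd_mult_cancel: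
  fixes p x y :: int
  assumes "prime p" "p^j dvd x * y" "\<not> p^(w+1) dvd x"
  shows "p^(j-w) dvd y"
proof (cases "y = 0")
  case False
  have x0: "x \<noteq> 0" using assms(3) by auto
  have nu: "\<not> is_unit p" using assms(1) not_prime_unit by blast
  have "multiplicity p x < w+1" using multiplicity_lessI[OF x0 nu assms(3)] .
  moreover have "j \<le> multiplicity p (x*y)" using multiplicity_geI[OF _ nu assms(2)] x0 False by simp
  moreover have "multiplicity p (x*y) = multiplicity p x + multiplicity p y"
    using prime_elem_multiplicity_mult_distrib[OF prime_imp_prime_elem[OF assms(1)] x0 False] .
  ultimately have "j - w \<le> multiplicity p y" by linarith
  then show ?thesis by (rule multiplicity_dvd')
qed simp

lemma power_Suc_multiplicity_not_dvd:
  fixes p x :: "'a :: factorial_semiring"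
  assumes "x \<noteq> 0" "\<not> is_unit p"
  shows "\<not> p ^ Suc (multiplicity p x) dvd x"
  using assms by (metis power_dvd_iff_le_multiplicity Suc_n_not_le_n)

(* The simplifier rewrites {t \<in> {a..<b}. P t} into this shape. *)
lemma finite_int_range_Collect [simp]: "finite {t :: int. a \<le> t \<and> t < b \<and> P t}"
  by (rule finite_subset[of _ "{a..<b}"]) auto

lemma card_cong_class_le:
  fixes m n r :: int
  assumes "m > 0" "n \<ge> 0" "m dvd n"
  shows "int (card {t \<in> {0..<n}. m dvd t - r}) \<le> n div m"
proof -
  let ?C = "{t \<in> {0..<n}. m dvd t - r}"
  have "inj_on (\<lambda>t. t div m) ?C"
  proof (rule inj_onI)
    fix s t assume "s \<in> ?C" "t \<in> ?C" "s div m = t div m"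
    then show "s = t" by (metis div_mult_mod_eq mem_Collect_eq mod_eq_dvd_iff)
  qed
  moreover have "(\<lambda>t. t div m) ` ?C \<subseteq> {0..<n div m}"
  proof
    fix z assume "z \<in> (\<lambda>t. t div m) ` ?C"
    then obtain t where t: "0 \<le> t" "t < n" "z = t div m" by auto
    obtain k where k: "n = m * k" using assms(3) by (elim dvdE)
    have "m * z \<le> t"
      unfolding t(3) using pos_mod_sign[OF assms(1), of t] minus_mod_eq_mult_div[of t m] by linarith
    then have "m * z < m * k" using t k by linarith
    then have "z < k" using assms(1) by (simp add: mult_less_cancel_left_pos)
    then show "z \<in> {0..<n div m}" using t k assms(1) by (simp add: pos_imp_zdiv_nonneg_iff)
  qed
  ultimately have "card ?C \<le> card {0..<n div m}"
    by (metis card_image card_mono finite_atLeastLessThan_int)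
  then show ?thesis using assms le_nat_iff[of "n div m"] by (simp add: pos_imp_zdiv_nonneg_iff)
qed

lemma card_cong_class_prime_power_le:
  fixes p :: int
  assumes "p > 0"
  shows "int (card {t \<in> {0..<p^j}. p^r dvd t - t0}) \<le> p^(j - r)"
proof -
  have "{t \<in> {0..<p^j}. p^r dvd t - t0} \<subseteq> {t \<in> {0..<p^j}. p^(min r j) dvd t - t0}"
    using le_imp_power_dvd[of "min r j" r p] dvd_trans by auto
  then have "card {t \<in> {0..<p^j}. p^r dvd t - t0} \<le> card {t \<in> {0..<p^j}. p^(min r j) dvd t - t0}"
    by (intro card_mono) auto
  also have "int \<dots> \<le> p^j div p^(min r j)"
    using assms by (intro card_cong_class_le) (simp_all add: le_imp_power_dvd)
  also have "\<dots> = p^(j - min r j)"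
    using assms by (simp add: power_diff)
  also have "\<dots> = p^(j - r)" by (simp add: min_def)
  finally show ?thesis by simp
qed

lemma card_multiples_below:
  fixes m n :: int
  assumes "m > 0" "n \<ge> 0"
  shows "card {t \<in> {0..<m * n}. m dvd t} = nat n"
proof -
  have "{t \<in> {0..<m * n}. m dvd t} = (\<lambda>u. m * u) ` {0..<n}"
    using assms by (auto simp: zero_le_mult_iff elim!: dvdE)
  moreover have "inj_on (\<lambda>u. m * u) {0..<n}" using assms by (intro inj_onI) simp
  ultimately show ?thesis by (simp add: card_image)
qed

lemma card_box_pairs_common_divisor:
  fixes m n :: int
  assumes "m > 0" "n \<ge> 0"
  shows "card (box_pairs (m * n) (\<lambda>x1 x2. m dvd x1 \<and> m dvd x2)) = nat n ^ 2"
proof -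
  have "box_pairs (m * n) (\<lambda>x1 x2. m dvd x1 \<and> m dvd x2) =
      {t \<in> {0..<m * n}. m dvd t} \<times> {t \<in> {0..<m * n}. m dvd t}"
    by (auto simp: box_pairs_def)
  then show ?thesis using card_multiples_below[OF assms]
    by (simp add: card_cartesian_product power2_eq_square)
qed

lemma card_linear_cong_prime_power_le:
  fixes p a v :: int
  assumes p: "prime p" and "a \<noteq> 0"
  shows "int (card {t \<in> {0..<p^j}. p^i dvd a * t + v}) \<le> p^(j - i + multiplicity p a)"
proof (cases "{t \<in> {0..<p^j}. p^i dvd a * t + v} = {}")
  case True
  show ?thesis unfolding True using prime_gt_0_int[OF p] by simp
next
  case False
  then obtain t1 where t1: "p^i dvd a * t1 + v" by blast
  define z where "z = multiplicity p a"
  have not_dvd_a: "\<not> p^(z+1) dvd a"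
    unfolding z_def using power_Suc_multiplicity_not_dvd[OF \<open>a \<noteq> 0\<close>] p not_prime_unit by auto
  have "{t \<in> {0..<p^j}. p^i dvd a * t + v} \<subseteq> {t \<in> {0..<p^j}. p^(i - z) dvd t - t1}"
  proof safe
    fix t assume "p^i dvd a * t + v"
    moreover have "a * (t - t1) = (a * t + v) - (a * t1 + v)" by algebra
    ultimately have "p^i dvd a * (t - t1)" using t1 by (metis dvd_diff)
    then show "p^(i - z) dvd t - t1" by (rule prime_power_dvd_mult_cancel[OF p _ not_dvd_a])
  qed
  then have "card {t \<in> {0..<p^j}. p^i dvd a * t + v} \<le> card {t \<in> {0..<p^j}. p^(i - z) dvd t - t1}"
    by (intro card_mono) auto
  also have "int \<dots> \<le> p^(j - (i - z))"
    using p by (intro card_cong_class_prime_power_le) (simp add: prime_gt_0_int)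
  also have "\<dots> \<le> p^(j - i + z)"
    using p by (intro power_increasing) (auto simp: prime_ge_1_int)
  finally show ?thesis unfolding z_def by simp
qed

section \<open>Roots of a quadratic polynomial modulo prime powers\<close>

lemma quadratic_diff_factor:
  fixes a b c t t0 :: int
  shows "(a*t^2 + 2*b*t + c) - (a*t0^2 + 2*b*t0 + c) = (t - t0) * (a*t + (a*t0 + 2*b))"
  by algebra

lemma quadratic_derivative_square:
  "(2*a*t0 + 2*b)^2 = 4*a*(a*t0^2 + 2*b*t0 + c) + disc_form a b c"
  unfolding disc_form_def by algebra

lemma quadratic_root_cases:
  fixes p a b c t t0 :: int
  assumes p: "prime p" and "p^j dvd a*t0^2 + 2*b*t0 + c" "p^j dvd a*t^2 + 2*b*t + c"
    and not_dvd_u: "\<not> p^(w+1) dvd 2*a*t0 + 2*b"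
  shows "p^(j-w) dvd t - t0 \<or> p^(j-w) dvd a*t + (a*t0 + 2*b)"
proof -
  have prod: "p^j dvd (t - t0) * (a*t + (a*t0 + 2*b))"
    using dvd_diff[OF assms(3,2)] by (simp only: quadratic_diff_factor)
  have u: "a*t + (a*t0 + 2*b) = (2*a*t0 + 2*b) + a*(t - t0)" by algebra
  show ?thesis
  proof (cases "p^(w+1) dvd t - t0")
    case True
    then have "\<not> p^(w+1) dvd a*t + (a*t0 + 2*b)"
      using not_dvd_u unfolding u by (metis dvd_add_left_iff dvd_mult)
    then show ?thesis using prime_power_dvd_mult_cancel[OF p] prod by (metis mult.commute)
  next
    case False
    then show ?thesis using prime_power_dvd_mult_cancel[OF p prod] by blast
  qed
qed

lemma root_derivative_valuation:
  fixes p a b c t0 :: int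
  assumes p: "prime p" and root: "p^j dvd a*t0^2 + 2*b*t0 + c"
    and not_dvd_disc: "\<not> p^j dvd disc_form a b c"
  defines "w \<equiv> multiplicity p (2*a*t0 + 2*b)"
  shows "w < j" "\<not> p^(w+1) dvd 2*a*t0 + 2*b" "p^w dvd disc_form a b c"
proof -
  let ?u = "2*a*t0 + 2*b"
  have dvd_disc: "p^k dvd disc_form a b c" if "k \<le> j" "p^k dvd ?u" for k
  proof -
    have "p^k dvd ?u^2" using that(2) by (simp add: power2_eq_square)
    moreover have "p^k dvd 4*a*(a*t0^2 + 2*b*t0 + c)"
      using dvd_trans[OF le_imp_power_dvd[OF that(1)] root] by simp
    ultimately have "p^k dvd ?u^2 - 4*a*(a*t0^2 + 2*b*t0 + c)" by (rule dvd_diff)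
    then show ?thesis using quadratic_derivative_square[of a t0 b c] by simp
  qed
  have "?u \<noteq> 0" using dvd_disc[of j] not_dvd_disc by auto
  then show "\<not> p^(w+1) dvd ?u"
    unfolding w_def using power_Suc_multiplicity_not_dvd p not_prime_unit by auto
  show "w < j"
  proof (rule ccontr)
    assume "\<not> w < j"
    then have "p^j dvd ?u" unfolding w_def by (intro multiplicity_dvd') simp
    then show False using dvd_disc[of j] not_dvd_disc by simp
  qed
  then show "p^w dvd disc_form a b c"
    unfolding w_def by (intro dvd_disc multiplicity_dvd) simp
qed

(*
  With w the valuation of the derivative 2 a t0 + 2 b, every root is congruent to t0 or lies in
  one class of a linear congruence modulo p^(j-w), and p^w divides the discriminant.
*)
lemma card_quadratic_roots_prime_power_le_of_root:
  fixes p a b c t0 :: int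
  assumes p: "prime p" and "a \<noteq> 0" and disc: "disc_form a b c \<noteq> 0"
    and root: "p^j dvd a*t0^2 + 2*b*t0 + c" and not_dvd_disc: "\<not> p^j dvd disc_form a b c"
  shows "int (card {t \<in> {0..<p^j}. p^j dvd a*t^2 + 2*b*t + c}) \<le> \<bar>disc_form a b c\<bar> * (1 + \<bar>a\<bar>)"
proof -
  define w where "w = multiplicity p (2*a*t0 + 2*b)"
  define z where "z = multiplicity p a"
  let ?T = "{t \<in> {0..<p^j}. p^j dvd a*t^2 + 2*b*t + c}"
  let ?A = "{t \<in> {0..<p^j}. p^(j-w) dvd t - t0}"
  let ?B = "{t \<in> {0..<p^j}. p^(j-w) dvd a*t + (a*t0 + 2*b)}"
  have p0: "p > 0" using p by (simp add: prime_gt_0_int)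
  note w = root_derivative_valuation[OF p root not_dvd_disc, folded w_def]
  have "?T \<subseteq> ?A \<union> ?B" using quadratic_root_cases[OF p root _ w(2)] by auto
  then have "card ?T \<le> card (?A \<union> ?B)" by (intro card_mono) simp_all
  also have "\<dots> \<le> card ?A + card ?B" by (rule card_Un_le)
  finally have "int (card ?T) \<le> int (card ?A) + int (card ?B)" by simp
  also have "\<dots> \<le> p^(j - (j-w)) + p^(j - (j-w) + z)"
    unfolding z_def
    by (rule add_mono[OF card_cong_class_prime_power_le[OF p0]
          card_linear_cong_prime_power_le[OF p \<open>a \<noteq> 0\<close>]])
  also have "\<dots> = p^w + p^w * p^z" using w(1) by (simp add: power_add)
  also have "\<dots> \<le> \<bar>disc_form a b c\<bar> + \<bar>disc_form a b c\<bar> * \<bar>a\<bar>"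
  proof -
    have "p^w \<le> \<bar>disc_form a b c\<bar>" using dvd_imp_le_int[OF disc w(3)] p0 by simp
    moreover have "p^z \<le> \<bar>a\<bar>"
      using dvd_imp_le_int[OF \<open>a \<noteq> 0\<close> multiplicity_dvd[of p a]] p0 unfolding z_def by simp
    ultimately show ?thesis using p0 by (intro add_mono mult_mono) simp_all
  qed
  finally show ?thesis by (simp add: algebra_simps)
qed

lemma card_quadratic_roots_prime_power_le:
  fixes p a b c :: int
  assumes p: "prime p" and "a \<noteq> 0" and disc: "disc_form a b c \<noteq> 0"
  shows "int (card {t \<in> {0..<p^j}. p^j dvd a*t^2 + 2*b*t + c}) \<le> \<bar>disc_form a b c\<bar> * (1 + \<bar>a\<bar>)"
proof -
  let ?T = "{t \<in> {0..<p^j}. p^j dvd a*t^2 + 2*b*t + c}"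
  consider "?T = {}" | "p^j dvd disc_form a b c" | t0 where "t0 \<in> ?T" "\<not> p^j dvd disc_form a b c"
    by blast
  then show ?thesis
  proof cases
    case 1
    show ?thesis unfolding 1 by simp
  next
    case 2
    have p0: "p > 0" using p by (simp add: prime_gt_0_int)
    have "card ?T \<le> card {0..<p^j}" by (rule card_mono) auto
    then have "int (card ?T) \<le> p^j" using p0 by (simp add: le_nat_iff)
    also have "\<dots> \<le> \<bar>disc_form a b c\<bar>" using dvd_imp_le_int[OF disc 2] p0 by simp
    also have "\<dots> \<le> \<bar>disc_form a b c\<bar> * (1 + \<bar>a\<bar>)"
      using mult_left_mono[of 1 "1 + \<bar>a\<bar>" "\<bar>disc_form a b c\<bar>"] by simp
    finally show ?thesis .
  next
    case 3
    then have "p^j dvd a*t0^2 + 2*b*t0 + c" by simp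
    then show ?thesis by (rule card_quadratic_roots_prime_power_le_of_root[OF assms _ 3(2)])
  qed
qed

lemma card_quadratic_roots_prime_le:
  fixes p a b c :: int
  assumes p: "prime p" and "\<not> p dvd a"
  shows "card {t \<in> {0..<p}. p dvd a*t^2 + 2*b*t + c} \<le> 2"
proof (cases "{t \<in> {0..<p}. p dvd a*t^2 + 2*b*t + c} = {}")
  case True
  show ?thesis unfolding True by simp
next
  case False
  then obtain t0 where root: "p dvd a*t0^2 + 2*b*t0 + c" by blast
  have p0: "p > 0" using p by (simp add: prime_gt_0_int)
  let ?A = "{t \<in> {0..<p^1}. p^1 dvd t - t0}"
  let ?B = "{t \<in> {0..<p^1}. p^1 dvd a*t + (a*t0 + 2*b)}"
  have "{t \<in> {0..<p}. p dvd a*t^2 + 2*b*t + c} \<subseteq> ?A \<union> ?B"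
  proof safe
    fix t assume root_t: "p dvd a*t^2 + 2*b*t + c" and not_dvd: "\<not> p^1 dvd a*t + (a*t0 + 2*b)"
    have "p dvd (t - t0) * (a*t + (a*t0 + 2*b))"
      using dvd_diff[OF root_t root] by (simp only: quadratic_diff_factor)
    with not_dvd show "p^1 dvd t - t0" using p by (simp add: prime_dvd_mult_iff)
  qed auto
  then have "card {t \<in> {0..<p}. p dvd a*t^2 + 2*b*t + c} \<le> card (?A \<union> ?B)"
    by (intro card_mono) simp_all
  also have "\<dots> \<le> card ?A + card ?B" by (rule card_Un_le)
  finally have "int (card {t \<in> {0..<p}. p dvd a*t^2 + 2*b*t + c}) \<le> int (card ?A) + int (card ?B)"
    by linarith
  moreover have "int (card ?A) \<le> 1"
    using card_cong_class_prime_power_le[OF p0, of 1 1 t0] by simp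
  moreover have "int (card ?B) \<le> 1"
    using card_linear_cong_prime_power_le[OF p, of a 1 1] assms(2) not_dvd_imp_multiplicity_0
    by fastforce
  ultimately show ?thesis by linarith
qed

section \<open>Zeros of one form in a box\<close>

lemma qform_sub_factor:
  "qform a b c y1 y2 - y2^2 * (a*t^2 + 2*b*t + c) = (y1 - t*y2) * (a*(y1 + t*y2) + 2*b*y2)"
  unfolding qform_def by algebra

(* The root t is y1 / y2 modulo m. *)
lemma qform_dehomogenize_mod:
  fixes m y1 y2 :: int
  assumes "m > 0" and coprime: "coprime y2 m" and q: "m dvd qform a b c y1 y2"
  obtains t where "t \<in> {0..<m}" "m dvd a*t^2 + 2*b*t + c" "m dvd y1 - t*y2"
proof -
  obtain w where w: "[y2 * w = 1] (mod m)" using cong_solve_coprime_int[OF coprime] by blast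
  define t where "t = (y1 * w) mod m"
  have "[t * y2 = y1 * w * y2] (mod m)"
    unfolding t_def by (intro cong_mult) (simp_all add: cong_def)
  also have "[y1 * w * y2 = y1 * 1] (mod m)"
    using cong_scalar_left[OF w, of y1] by (simp add: mult_ac)
  finally have lin: "m dvd y1 - t * y2" by (simp add: cong_iff_dvd_diff dvd_diff_commute)
  then have "m dvd qform a b c y1 y2 - y2^2 * (a*t^2 + 2*b*t + c)"
    unfolding qform_sub_factor by (rule dvd_mult2)
  with q have "m dvd qform a b c y1 y2 - (qform a b c y1 y2 - y2^2 * (a*t^2 + 2*b*t + c))"
    by (rule dvd_diff)
  then have "m dvd y2^2 * (a*t^2 + 2*b*t + c)" by simp
  moreover have "coprime m (y2^2)" using coprime by (simp add: coprime_commute)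
  ultimately have "m dvd a*t^2 + 2*b*t + c" by (simp add: coprime_dvd_mult_right_iff)
  moreover have "t \<in> {0..<m}" unfolding t_def using \<open>m > 0\<close> by simp
  ultimately show thesis using lin that by blast
qed

lemma box_pairs_unit_y2_subset:
  fixes p :: int
  assumes p: "prime p"
  shows "box_pairs N (\<lambda>y1 y2. \<not> p dvd y2 \<and> p^j dvd qform a b c y1 y2)
    \<subseteq> (\<Union>(t, y2)\<in>{t \<in> {0..<p^j}. p^j dvd a*t^2 + 2*b*t + c} \<times> {y \<in> {0..<N}. \<not> p dvd y}.
          (\<lambda>y1. (y1, y2)) ` {y1 \<in> {0..<N}. p^j dvd y1 - t*y2})"
proof
  fix x assume "x \<in> box_pairs N (\<lambda>y1 y2. \<not> p dvd y2 \<and> p^j dvd qform a b c y1 y2)"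
  then obtain y1 y2 where x: "x = (y1, y2)" and y: "0 \<le> y1" "y1 < N" "0 \<le> y2" "y2 < N"
    and unit: "\<not> p dvd y2" and q: "p^j dvd qform a b c y1 y2"
    unfolding box_pairs_def by blast
  have "coprime y2 (p^j)" using p unit by (simp add: prime_imp_coprime coprime_commute)
  moreover have "p^j > 0" using p by (simp add: prime_gt_0_int)
  ultimately obtain t where t: "t \<in> {0..<p^j}" "p^j dvd a*t^2 + 2*b*t + c" "p^j dvd y1 - t*y2"
    using qform_dehomogenize_mod[OF _ _ q] by blast
  show "x \<in> (\<Union>(t, y2)\<in>{t \<in> {0..<p^j}. p^j dvd a*t^2 + 2*b*t + c} \<times> {y \<in> {0..<N}. \<not> p dvd y}.
      (\<lambda>y1. (y1, y2)) ` {y1 \<in> {0..<N}. p^j dvd y1 - t*y2})"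
    by (rule UN_I[of "(t, y2)"]) (use t x y unit in auto)
qed

lemma card_box_pairs_unit_y2_le:
  fixes p a b c N :: int
  assumes p: "prime p" and "p^j dvd N" "N > 0"
  shows "int (card (box_pairs N (\<lambda>y1 y2. \<not> p dvd y2 \<and> p^j dvd qform a b c y1 y2)))
     \<le> int (card {t \<in> {0..<p^j}. p^j dvd a*t^2 + 2*b*t + c}) * int (card {y \<in> {0..<N}. \<not> p dvd y})
        * (N div p^j)"
proof -
  define T where "T = {t \<in> {0..<p^j}. p^j dvd a*t^2 + 2*b*t + c}"
  define Y where "Y = {y \<in> {0..<N}. \<not> p dvd y}"
  define F where "F = (\<lambda>(t, y2). (\<lambda>y1. (y1, y2)) ` {y1 \<in> {0..<N}. p^j dvd y1 - t*y2})"
  have "card (box_pairs N (\<lambda>y1 y2. \<not> p dvd y2 \<and> p^j dvd qform a b c y1 y2)) \<le> card (\<Union>i\<in>T \<times> Y. F i)"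
    unfolding T_def Y_def F_def
    by (rule card_mono[OF _ box_pairs_unit_y2_subset[OF p]]) (simp add: case_prod_beta)
  also have "\<dots> \<le> (\<Sum>i\<in>T \<times> Y. card (F i))" by (rule card_UN_le) (simp add: T_def Y_def)
  finally have "int (card (box_pairs N (\<lambda>y1 y2. \<not> p dvd y2 \<and> p^j dvd qform a b c y1 y2)))
      \<le> int (\<Sum>i\<in>T \<times> Y. card (F i))" by (rule of_nat_mono)
  also have "\<dots> = (\<Sum>i\<in>T \<times> Y. int (card (F i)))" by simp
  also have "\<dots> \<le> (\<Sum>i\<in>T \<times> Y. N div p^j)"
  proof (rule sum_mono, clarify)
    fix t y2
    have "card (F (t, y2)) \<le> card {y1 \<in> {0..<N}. p^j dvd y1 - t*y2}"
      unfolding F_def by (simp add: card_image_le)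
    also have "int \<dots> \<le> N div p^j"
      using card_cong_class_le[of "p^j" N "t*y2"] p assms(2,3) by (simp add: prime_gt_0_int)
    finally show "int (card (F (t, y2))) \<le> N div p^j" by simp
  qed
  also have "\<dots> = int (card T) * int (card Y) * (N div p^j)" by (simp add: card_cartesian_product)
  finally show ?thesis unfolding T_def Y_def .
qed

lemma card_box_pairs_unit_y2_prime_power_le:
  fixes p a b c :: int
  assumes p: "prime p" and "a \<noteq> 0" "disc_form a b c \<noteq> 0" and "j \<le> n"
  shows "int (card (box_pairs (p^n) (\<lambda>y1 y2. \<not> p dvd y2 \<and> p^j dvd qform a b c y1 y2)))
     \<le> \<bar>disc_form a b c\<bar> * (1 + \<bar>a\<bar>) * p^(2*n - j)"
proof -
  have p0: "p > 0" using p by (simp add: prime_gt_0_int)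
  have "card {y \<in> {0..<p^n}. \<not> p dvd y} \<le> card {0..<p^n}" by (rule card_mono) auto
  then have Y: "int (card {y \<in> {0..<p^n}. \<not> p dvd y}) \<le> p^n" using p0 by (simp add: le_nat_iff)
  have "p^n div p^j = p^(n - j)" using p0 \<open>j \<le> n\<close> by (simp add: power_diff)
  then have "int (card (box_pairs (p^n) (\<lambda>y1 y2. \<not> p dvd y2 \<and> p^j dvd qform a b c y1 y2)))
      \<le> int (card {t \<in> {0..<p^j}. p^j dvd a*t^2 + 2*b*t + c}) * int (card {y \<in> {0..<p^n}. \<not> p dvd y}) * p^(n - j)"
    using card_box_pairs_unit_y2_le[OF p, of j "p^n"] p0 \<open>j \<le> n\<close> by (simp add: le_imp_power_dvd)
  also have "\<dots> \<le> (\<bar>disc_form a b c\<bar> * (1 + \<bar>a\<bar>)) * p^n * p^(n - j)"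
    using card_quadratic_roots_prime_power_le[OF assms(1-3)] Y p0 by (intro mult_right_mono mult_mono) auto
  also have "\<dots> = \<bar>disc_form a b c\<bar> * (1 + \<bar>a\<bar>) * p^(2*n - j)"
    using \<open>j \<le> n\<close> by (simp add: power_add[symmetric] mult.assoc mult_2)
  finally show ?thesis .
qed

lemma qform_scale: "qform a b c (d*y1) (d*y2) = d^2 * qform a b c y1 y2"
  unfolding qform_def by algebra

lemma qform_swap: "qform a b c y1 y2 = qform c b a y2 y1"
  unfolding qform_def by algebra

lemma disc_form_swap: "disc_form c b a = disc_form a b c"
  unfolding disc_form_def by algebra

lemma power_dvd_qform_scaled:
  fixes d :: int
  assumes "d \<noteq> 0" "d^m dvd qform a b c (d^k * y1) (d^k * y2)" "2*k \<le> m"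
  shows "d^(m - 2*k) dvd qform a b c y1 y2"
proof -
  have "d^m = d^(2*k) * d^(m - 2*k)" using assms(3) by (simp add: power_add[symmetric])
  moreover have "qform a b c (d^k * y1) (d^k * y2) = d^(2*k) * qform a b c y1 y2"
    unfolding qform_scale power_even_eq ..
  ultimately show ?thesis using assms(1,2) by simp
qed

lemma exact_common_power_decompose:
  fixes p x1 x2 :: int
  assumes "p \<noteq> 0" "p^k dvd gcd x1 x2" "\<not> p^(k+1) dvd gcd x1 x2"
  obtains y1 y2 where "x1 = p^k * y1" "x2 = p^k * y2" "\<not> (p dvd y1 \<and> p dvd y2)"
proof -
  have "p^k dvd x1" "p^k dvd x2" using assms(2) by simp_all
  then obtain y1 y2 where y: "x1 = p^k * y1" "x2 = p^k * y2" unfolding dvd_def by blast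
  have "\<not> (p dvd y1 \<and> p dvd y2)"
  proof
    assume "p dvd y1 \<and> p dvd y2"
    then have "p^k * p dvd x1 \<and> p^k * p dvd x2" unfolding y by (auto intro: mult_dvd_mono)
    then show False using assms(3) by (simp add: mult.commute)
  qed
  with y that show thesis by blast
qed

(*
  Dividing out p^k leaves a primitive point; if p divides y2 then p does not divide y1, and
  swapping the coordinates replaces (a, b, c) by (c, b, a).
*)
lemma box_pairs_exact_common_power_subset:
  fixes p :: int
  assumes p0: "p > 0" and "2*k \<le> M" "k \<le> E"
  shows "box_pairs (p^E) (\<lambda>x1 x2. p^k dvd gcd x1 x2 \<and> \<not> p^(k+1) dvd gcd x1 x2 \<and> p^M dvd qform a b c x1 x2)
    \<subseteq> (\<lambda>(y1, y2). (p^k * y1, p^k * y2)) `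
         (prod.swap ` box_pairs (p^(E-k)) (\<lambda>y1 y2. \<not> p dvd y2 \<and> p^(M-2*k) dvd qform c b a y1 y2)
          \<union> box_pairs (p^(E-k)) (\<lambda>y1 y2. \<not> p dvd y2 \<and> p^(M-2*k) dvd qform a b c y1 y2))"
    (is "_ \<subseteq> ?scale ` (prod.swap ` ?Y' \<union> ?Y)")
proof
  fix x assume "x \<in> box_pairs (p^E)
    (\<lambda>x1 x2. p^k dvd gcd x1 x2 \<and> \<not> p^(k+1) dvd gcd x1 x2 \<and> p^M dvd qform a b c x1 x2)"
  then obtain x1 x2 where x: "x = (x1, x2)" "0 \<le> x1" "x1 < p^E" "0 \<le> x2" "x2 < p^E"
    and exact: "p^k dvd gcd x1 x2" "\<not> p^(k+1) dvd gcd x1 x2" and q: "p^M dvd qform a b c x1 x2"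
    unfolding box_pairs_def by blast
  obtain y1 y2 where y: "x1 = p^k * y1" "x2 = p^k * y2" and prim: "\<not> (p dvd y1 \<and> p dvd y2)"
    using exact_common_power_decompose[OF _ exact] p0 by auto
  have "p^E = p^k * p^(E-k)" using \<open>k \<le> E\<close> by (simp add: power_add[symmetric])
  moreover have "p^k > 0" using p0 by simp
  ultimately have range: "0 \<le> y1" "y1 < p^(E-k)" "0 \<le> y2" "y2 < p^(E-k)"
    using x(2-5) unfolding y by (simp_all add: zero_le_mult_iff)
  have qy: "p^(M-2*k) dvd qform a b c y1 y2"
    using q p0 \<open>2*k \<le> M\<close> y by (intro power_dvd_qform_scaled) simp_all
  have "(y1, y2) \<in> prod.swap ` ?Y' \<union> ?Y"
  proof (cases "p dvd y2")
    case True
    then have "(y2, y1) \<in> ?Y'"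
      using prim range qy qform_swap[of a b c y1 y2] by (simp add: box_pairs_def)
    then show ?thesis by (intro UnI1 rev_image_eqI[of "(y2, y1)"]) simp_all
  next
    case False
    then show ?thesis using range qy by (simp add: box_pairs_def)
  qed
  then show "x \<in> ?scale ` (prod.swap ` ?Y' \<union> ?Y)" by (rule rev_image_eqI) (simp add: x(1) y)
qed

lemma card_box_pairs_exact_common_power_le:
  fixes p a b c :: int
  assumes p: "prime p" and "a \<noteq> 0" "c \<noteq> 0" and disc: "disc_form a b c \<noteq> 0"
    and "2*k \<le> M" "M \<le> E"
  shows "int (card (box_pairs (p^E)
      (\<lambda>x1 x2. p^k dvd gcd x1 x2 \<and> \<not> p^(k+1) dvd gcd x1 x2 \<and> p^M dvd qform a b c x1 x2)))
    \<le> \<bar>disc_form a b c\<bar> * (2 + \<bar>a\<bar> + \<bar>c\<bar>) * p^(2*E - M)"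
proof -
  define Y where "Y = box_pairs (p^(E-k)) (\<lambda>y1 y2. \<not> p dvd y2 \<and> p^(M-2*k) dvd qform a b c y1 y2)"
  define Y' where "Y' = box_pairs (p^(E-k)) (\<lambda>y1 y2. \<not> p dvd y2 \<and> p^(M-2*k) dvd qform c b a y1 y2)"
  have jn: "M - 2*k \<le> E - k" and exponent: "2*(E-k) - (M-2*k) = 2*E - M" using assms(5,6) by simp_all
  have "card (box_pairs (p^E)
      (\<lambda>x1 x2. p^k dvd gcd x1 x2 \<and> \<not> p^(k+1) dvd gcd x1 x2 \<and> p^M dvd qform a b c x1 x2))
      \<le> card ((\<lambda>(y1, y2). (p^k * y1, p^k * y2)) ` (prod.swap ` Y' \<union> Y))"
    unfolding Y_def Y'_def using p assms(5,6)
    by (intro card_mono box_pairs_exact_common_power_subset) (simp_all add: prime_gt_0_int)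
  also have "\<dots> \<le> card (prod.swap ` Y' \<union> Y)" by (rule card_image_le) (simp add: Y_def Y'_def)
  also have "\<dots> \<le> card (prod.swap ` Y') + card Y" by (rule card_Un_le)
  also have "\<dots> \<le> card Y' + card Y" using card_image_le[of Y' prod.swap] by (simp add: Y'_def)
  finally have "int (card (box_pairs (p^E)
      (\<lambda>x1 x2. p^k dvd gcd x1 x2 \<and> \<not> p^(k+1) dvd gcd x1 x2 \<and> p^M dvd qform a b c x1 x2)))
      \<le> int (card Y') + int (card Y)" by simp
  also have "\<dots> \<le> \<bar>disc_form a b c\<bar> * (1 + \<bar>c\<bar>) * p^(2*E - M)
      + \<bar>disc_form a b c\<bar> * (1 + \<bar>a\<bar>) * p^(2*E - M)"
  proof (rule add_mono)
    show "int (card Y') \<le> \<bar>disc_form a b c\<bar> * (1 + \<bar>c\<bar>) * p^(2*E - M)"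
      using card_box_pairs_unit_y2_prime_power_le[OF p \<open>c \<noteq> 0\<close> _ jn, of b a] disc
      unfolding Y'_def exponent disc_form_swap[of a b c] by simp
    show "int (card Y) \<le> \<bar>disc_form a b c\<bar> * (1 + \<bar>a\<bar>) * p^(2*E - M)"
      using card_box_pairs_unit_y2_prime_power_le[OF p \<open>a \<noteq> 0\<close> disc jn]
      unfolding Y_def exponent .
  qed
  also have "\<dots> = \<bar>disc_form a b c\<bar> * (2 + \<bar>a\<bar> + \<bar>c\<bar>) * p^(2*E - M)"
    by (simp add: algebra_simps)
  finally show ?thesis .
qed

section \<open>The resultant\<close>

(* Homogeneous Bezout identities; the linear cofactors are read off from the Sylvester matrix. *)
lemma res_form_x_cube:
  "res_form a1 b1 c1 a2 b2 c2 * x^3 =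
     ((a1*c2^2 - (2*b1)*(2*b2)*c2 + c1*(2*b2)^2 - c1*a2*c2) * x + (-(2*b1)*c2^2 + c1*(2*b2)*c2) * y)
       * qform a1 b1 c1 x y
   + (((2*b1)^2*c2 - (2*b1)*c1*(2*b2) - a1*c1*c2 + c1^2*a2) * x + ((2*b1)*c1*c2 - c1^2*(2*b2)) * y)
       * qform a2 b2 c2 x y"
  unfolding res_form_def qform_def by algebra

lemma res_form_y_cube:
  "res_form a1 b1 c1 a2 b2 c2 * y^3 =
     ((a1*a2*(2*b2) - (2*b1)*a2^2) * x + (a1*(2*b2)^2 - a1*a2*c2 - (2*b1)*a2*(2*b2) + c1*a2^2) * y)
       * qform a1 b1 c1 x y
   + ((-(a1^2)*(2*b2) + a1*(2*b1)*a2) * x + (a1^2*c2 - a1*(2*b1)*(2*b2) + (2*b1)^2*a2 - a1*c1*a2) * y)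
       * qform a2 b2 c2 x y"
  unfolding res_form_def qform_def by algebra

lemma res_form_commute: "res_form a1 b1 c1 a2 b2 c2 = res_form a2 b2 c2 a1 b1 c1"
  unfolding res_form_def by algebra

lemma prime_power_dvd_res_form:
  fixes p x y :: int
  assumes p: "prime p" and prim: "\<not> (p dvd x \<and> p dvd y)"
    and "p^m dvd qform a1 b1 c1 x y" "p^m dvd qform a2 b2 c2 x y"
  shows "p^m dvd res_form a1 b1 c1 a2 b2 c2"
proof -
  have "p^m dvd res_form a1 b1 c1 a2 b2 c2 * x^3"
    using assms(3,4) by (subst res_form_x_cube) (intro dvd_add dvd_mult; assumption)
  moreover have "p^m dvd res_form a1 b1 c1 a2 b2 c2 * y^3"
    using assms(3,4) by (subst res_form_y_cube) (intro dvd_add dvd_mult; assumption)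
  moreover have "coprime (p^m) (x^3) \<or> coprime (p^m) (y^3)"
    using p prim by (auto simp: prime_imp_coprime coprime_commute)
  ultimately show ?thesis by (metis coprime_dvd_mult_left_iff)
qed

lemma exponent_less_abs_res_form:
  fixes p y1 y2 :: int
  assumes "prime p" "\<not> (p dvd y1 \<and> p dvd y2)"
    and "p^m dvd qform a1 b1 c1 y1 y2" "p^m dvd qform a2 b2 c2 y1 y2"
    and R: "res_form a1 b1 c1 a2 b2 c2 \<noteq> 0"
  shows "int m < \<bar>res_form a1 b1 c1 a2 b2 c2\<bar>"
proof -
  have "int m < 2^m" using less_exp[of m] by (metis of_nat_less_iff of_nat_numeral of_nat_power)
  also have "\<dots> \<le> p^m" using prime_ge_2_int[OF assms(1)] by (intro power_mono) simp_all
  also have "\<dots> \<le> \<bar>res_form a1 b1 c1 a2 b2 c2\<bar>"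
    using dvd_imp_le_int[OF R prime_power_dvd_res_form[OF assms(1-4)]] prime_gt_0_int[OF assms(1)]
    by simp
  finally show ?thesis .
qed

lemma common_exponent_le:
  fixes p x1 x2 :: int
  assumes p: "prime p" and R: "res_form a1 b1 c1 a2 b2 c2 \<noteq> 0"
    and exact: "p^k dvd gcd x1 x2" "\<not> p^(k+1) dvd gcd x1 x2"
    and q: "p^s dvd qform a1 b1 c1 x1 x2" "p^s dvd qform a2 b2 c2 x1 x2"
  shows "s \<le> 2*k + nat \<bar>res_form a1 b1 c1 a2 b2 c2\<bar>"
proof (cases "2*k \<le> s")
  case True
  have "p \<noteq> 0" using p by auto
  obtain y1 y2 where y: "x1 = p^k * y1" "x2 = p^k * y2" and prim: "\<not> (p dvd y1 \<and> p dvd y2)"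
    using exact_common_power_decompose[OF \<open>p \<noteq> 0\<close> exact] .
  have "int (s - 2*k) < \<bar>res_form a1 b1 c1 a2 b2 c2\<bar>"
    using q True \<open>p \<noteq> 0\<close> unfolding y
    by (intro exponent_less_abs_res_form[OF p prim _ _ R] power_dvd_qform_scaled)
  then show ?thesis by linarith
qed simp

section \<open>Common zeros of two forms modulo prime powers\<close>

lemma card_exponents_le:
  fixes M s R :: nat
  assumes "s \<le> M"
  shows "card {k. k < (M + 1) div 2 \<and> s \<le> 2*k + R} \<le> (R + 2) * (M - s + 1)"
proof -
  have "{k. k < (M + 1) div 2 \<and> s \<le> 2*k + R} \<subseteq> {(s - R) div 2..<(M + 1) div 2}" by auto
  then have "card {k. k < (M + 1) div 2 \<and> s \<le> 2*k + R} \<le> (M + 1) div 2 - (s - R) div 2"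
    using card_mono[of "{(s - R) div 2..<(M + 1) div 2}"] by simp
  also have "\<dots> \<le> M - s + R + 1" using assms by linarith
  also have "\<dots> \<le> (R + 2) * (M - s + 1)" by (simp add: algebra_simps)
  finally show ?thesis .
qed

lemma card_box_pairs_common_power_le:
  fixes p :: int
  assumes "p > 0" "M \<le> 2*K" "K \<le> E"
  shows "int (card (box_pairs (p^E) (\<lambda>x1 x2. p^K dvd x1 \<and> p^K dvd x2))) \<le> p^(2*E - M)"
proof -
  have "p^E = p^K * p^(E - K)" using assms(3) by (simp add: power_add[symmetric])
  then have "int (card (box_pairs (p^E) (\<lambda>x1 x2. p^K dvd x1 \<and> p^K dvd x2))) = (p^(E - K))^2"
    using card_box_pairs_common_divisor[of "p^K" "p^(E-K)"] assms(1) by simp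
  also have "\<dots> = p^(2*E - 2*K)" using assms(3) by (simp add: power_mult[symmetric] mult.commute diff_mult_distrib)
  also have "\<dots> \<le> p^(2*E - M)" using assms by (intro power_increasing) auto
  finally show ?thesis .
qed

lemma box_pairs_two_forms_subset:
  fixes p a1 b1 c1 a2 b2 c2 :: int
  assumes p: "prime p" and R: "res_form a1 b1 c1 a2 b2 c2 \<noteq> 0" and "s \<le> M"
  shows "box_pairs N (\<lambda>x1 x2. p^M dvd qform a1 b1 c1 x1 x2 \<and> p^s dvd qform a2 b2 c2 x1 x2)
    \<subseteq> box_pairs N (\<lambda>x1 x2. p^K dvd x1 \<and> p^K dvd x2) \<union>
      (\<Union>k\<in>{k. k < K \<and> s \<le> 2*k + nat \<bar>res_form a1 b1 c1 a2 b2 c2\<bar>}. box_pairs N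
        (\<lambda>x1 x2. p^k dvd gcd x1 x2 \<and> \<not> p^(k+1) dvd gcd x1 x2 \<and> p^M dvd qform a1 b1 c1 x1 x2))"
proof
  fix x assume "x \<in> box_pairs N (\<lambda>x1 x2. p^M dvd qform a1 b1 c1 x1 x2 \<and> p^s dvd qform a2 b2 c2 x1 x2)"
  then obtain x1 x2 where x: "x = (x1, x2)" "0 \<le> x1" "x1 < N" "0 \<le> x2" "x2 < N"
    and q: "p^M dvd qform a1 b1 c1 x1 x2" "p^s dvd qform a2 b2 c2 x1 x2"
    unfolding box_pairs_def by blast
  show "x \<in> box_pairs N (\<lambda>x1 x2. p^K dvd x1 \<and> p^K dvd x2) \<union>
      (\<Union>k\<in>{k. k < K \<and> s \<le> 2*k + nat \<bar>res_form a1 b1 c1 a2 b2 c2\<bar>}. box_pairs N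
        (\<lambda>x1 x2. p^k dvd gcd x1 x2 \<and> \<not> p^(k+1) dvd gcd x1 x2 \<and> p^M dvd qform a1 b1 c1 x1 x2))"
  proof (cases "p^K dvd x1 \<and> p^K dvd x2")
    case True
    then show ?thesis using x by (simp add: box_pairs_def)
  next
    case False
    then have "gcd x1 x2 \<noteq> 0" by auto
    define k where "k = multiplicity p (gcd x1 x2)"
    have "\<not> is_unit p" using p not_prime_unit by blast
    then have exact: "p^k dvd gcd x1 x2" "\<not> p^(k+1) dvd gcd x1 x2"
      unfolding k_def using power_Suc_multiplicity_not_dvd[OF \<open>gcd x1 x2 \<noteq> 0\<close>]
      by (simp_all only: multiplicity_dvd Suc_eq_plus1)
    have "k < K"
    proof (rule ccontr)
      assume "\<not> k < K"
      then have "p^K dvd gcd x1 x2" using exact(1) le_imp_power_dvd[of K k p] dvd_trans by auto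
      then show False using False by simp
    qed
    moreover have "p^s dvd qform a1 b1 c1 x1 x2"
      using q(1) le_imp_power_dvd[OF \<open>s \<le> M\<close>, of p] dvd_trans by blast
    then have "s \<le> 2*k + nat \<bar>res_form a1 b1 c1 a2 b2 c2\<bar>" by (rule common_exponent_le[OF p R exact _ q(2)])
    ultimately have "k \<in> {k. k < K \<and> s \<le> 2*k + nat \<bar>res_form a1 b1 c1 a2 b2 c2\<bar>}" by simp
    moreover have "x \<in> box_pairs N
        (\<lambda>x1 x2. p^k dvd gcd x1 x2 \<and> \<not> p^(k+1) dvd gcd x1 x2 \<and> p^M dvd qform a1 b1 c1 x1 x2)"
      using x q exact by (simp add: box_pairs_def)
    ultimately show ?thesis by blast
  qed
qed

(*
  Points divisible by p^K, K = ceil (M / 2), are counted trivially.  Every other point has an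
  exact common p-power k < K, and by common_exponent_le only the O(M - s + 1) values of k with
  s <= 2 k + |R| occur.
*)
lemma card_box_pairs_two_forms_le:
  fixes p a1 b1 c1 a2 b2 c2 :: int and E M s :: nat
  assumes p: "prime p" and "a1 \<noteq> 0" "c1 \<noteq> 0" "disc_form a1 b1 c1 \<noteq> 0"
    and R: "res_form a1 b1 c1 a2 b2 c2 \<noteq> 0" and "s \<le> M" "M \<le> E"
  shows "int (card (box_pairs (p^E)
      (\<lambda>x1 x2. p^M dvd qform a1 b1 c1 x1 x2 \<and> p^s dvd qform a2 b2 c2 x1 x2)))
    \<le> (1 + (\<bar>res_form a1 b1 c1 a2 b2 c2\<bar> + 2) * (\<bar>disc_form a1 b1 c1\<bar> * (2 + \<bar>a1\<bar> + \<bar>c1\<bar>)))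
       * int (M - s + 1) * p^(2*E - M)"
proof -
  define K where "K = (M + 1) div 2"
  define Rb where "Rb = nat \<bar>res_form a1 b1 c1 a2 b2 c2\<bar>"
  define KS where "KS = {k. k < K \<and> s \<le> 2*k + Rb}"
  define Kf where "Kf = \<bar>disc_form a1 b1 c1\<bar> * (2 + \<bar>a1\<bar> + \<bar>c1\<bar>)"
  define P where "P = p^(2*E - M)"
  define S where "S = box_pairs (p^E) (\<lambda>x1 x2. p^M dvd qform a1 b1 c1 x1 x2 \<and> p^s dvd qform a2 b2 c2 x1 x2)"
  define Z where "Z = box_pairs (p^E) (\<lambda>x1 x2. p^K dvd x1 \<and> p^K dvd x2)"
  define X where "X k = box_pairs (p^E)
      (\<lambda>x1 x2. p^k dvd gcd x1 x2 \<and> \<not> p^(k+1) dvd gcd x1 x2 \<and> p^M dvd qform a1 b1 c1 x1 x2)" for k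
  have p0: "p > 0" and P0: "P > 0" and Kf0: "Kf \<ge> 0"
    using p by (simp_all add: prime_gt_0_int P_def Kf_def)
  have cover: "S \<subseteq> Z \<union> (\<Union>k\<in>KS. X k)"
    unfolding S_def Z_def X_def KS_def Rb_def by (rule box_pairs_two_forms_subset[OF p R \<open>s \<le> M\<close>])
  have "card S \<le> card (Z \<union> (\<Union>k\<in>KS. X k))" by (rule card_mono[OF _ cover]) (simp add: Z_def X_def KS_def)
  also have "\<dots> \<le> card Z + card (\<Union>k\<in>KS. X k)" by (rule card_Un_le)
  also have "\<dots> \<le> card Z + (\<Sum>k\<in>KS. card (X k))" using card_UN_le[of KS X] by (simp add: KS_def)
  finally have "int (card S) \<le> int (card Z) + (\<Sum>k\<in>KS. int (card (X k)))"
    by (metis of_nat_add of_nat_le_iff of_nat_sum)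
  also have "\<dots> \<le> P + (\<Sum>k\<in>KS. Kf * P)"
  proof (rule add_mono)
    show "int (card Z) \<le> P"
      unfolding Z_def P_def K_def using p0 \<open>M \<le> E\<close> by (intro card_box_pairs_common_power_le) auto
    show "(\<Sum>k\<in>KS. int (card (X k))) \<le> (\<Sum>k\<in>KS. Kf * P)"
    proof (rule sum_mono)
      fix k assume "k \<in> KS"
      then have "k < (M + 1) div 2" by (simp add: KS_def K_def)
      then have "2*k \<le> M" by linarith
      then show "int (card (X k)) \<le> Kf * P" unfolding X_def Kf_def P_def
        by (rule card_box_pairs_exact_common_power_le[OF p assms(2-4) _ \<open>M \<le> E\<close>])
    qed
  qed
  also have "\<dots> = P + int (card KS) * (Kf * P)" by simp
  also have "\<dots> \<le> P + int ((Rb + 2) * (M - s + 1)) * (Kf * P)"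
  proof -
    have "card KS \<le> (Rb + 2) * (M - s + 1)"
      unfolding KS_def K_def by (rule card_exponents_le[OF \<open>s \<le> M\<close>])
    then have "int (card KS) \<le> int ((Rb + 2) * (M - s + 1))" by (rule of_nat_mono)
    then show ?thesis using Kf0 P0 by (intro add_left_mono mult_right_mono) simp_all
  qed
  also have "\<dots> = P + (int Rb + 2) * int (M - s + 1) * (Kf * P)"
    by (simp only: of_nat_mult of_nat_add of_nat_numeral)
  also have "\<dots> \<le> (1 + (int Rb + 2) * Kf) * int (M - s + 1) * P"
  proof -
    have "P * 1 \<le> P * int (M - s + 1)" using P0 by (intro mult_left_mono) simp_all
    then show ?thesis by (simp add: algebra_simps)
  qed
  finally show ?thesis unfolding S_def Rb_def Kf_def P_def by simp
qed

section \<open>Densities at a single prime\<close>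

lemma dvd_qform: "d dvd x1 \<Longrightarrow> d dvd x2 \<Longrightarrow> d dvd qform a b c x1 x2"
  unfolding qform_def power2_eq_square by simp

lemma gcd_prime_power_eq_1_iff:
  fixes q x1 x2 :: int
  assumes q: "prime q" and "g \<ge> 1"
  shows "gcd (gcd x1 x2) (q^g) = 1 \<longleftrightarrow> \<not> (q dvd x1 \<and> q dvd x2)"
proof -
  have "gcd (gcd x1 x2) (q^g) = 1 \<longleftrightarrow> coprime (gcd x1 x2) q"
    using \<open>g \<ge> 1\<close> by (simp add: coprime_iff_gcd_eq_1[symmetric] coprime_power_right_iff)
  also have "\<dots> \<longleftrightarrow> \<not> q dvd gcd x1 x2"
  proof
    assume "coprime (gcd x1 x2) q"
    then show "\<not> q dvd gcd x1 x2" using q not_prime_unit coprime_common_divisor[of "gcd x1 x2" q q] by auto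
  next
    assume "\<not> q dvd gcd x1 x2"
    then have "coprime q (gcd x1 x2)" by (rule prime_imp_coprime[OF q])
    then show "coprime (gcd x1 x2) q" by (rule coprime_commute[THEN iffD1])
  qed
  finally show ?thesis by simp
qed

lemma rho_prime_eq_rho_star_plus:
  fixes p g :: nat
  assumes p: "prime p" and "g \<ge> 1"
  shows "rho g a b c (\<lambda>i. p) = rho_star g a b c (\<lambda>i. p) + p^(2*(g-1))"
proof -
  define q where "q = int p"
  define \<Phi> where "\<Phi> x1 x2 \<longleftrightarrow> (\<forall>i\<in>{1..g}. q dvd qform (a i) (b i) (c i) x1 x2)" for x1 x2
  have q: "prime q" and q0: "q > 0" unfolding q_def using p by (simp_all add: prime_gt_0_nat)
  have prod: "(\<Prod>i\<in>{1..g}. int p) = q^g" unfolding q_def by simp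
  have rho: "rho g a b c (\<lambda>i. p) = card (box_pairs (q^g) \<Phi>)"
    unfolding rho_eq_card_box_pairs prod \<Phi>_def q_def by (rule refl)
  have rho_star: "rho_star g a b c (\<lambda>i. p) =
      card (box_pairs (q^g) (\<lambda>x1 x2. \<Phi> x1 x2 \<and> gcd (gcd x1 x2) (q^g) = 1))"
    unfolding rho_star_eq_card_box_pairs prod \<Phi>_def q_def by (rule refl)
  have primitive: "(\<lambda>x1 x2. \<Phi> x1 x2 \<and> \<not> (q dvd x1 \<and> q dvd x2)) =
      (\<lambda>x1 x2. \<Phi> x1 x2 \<and> gcd (gcd x1 x2) (q^g) = 1)"
    by (simp add: gcd_prime_power_eq_1_iff[OF q \<open>g \<ge> 1\<close>])
  have imprimitive: "(\<lambda>x1 x2. \<Phi> x1 x2 \<and> q dvd x1 \<and> q dvd x2) = (\<lambda>x1 x2. q dvd x1 \<and> q dvd x2)"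
    unfolding \<Phi>_def using dvd_qform by blast
  have "rho g a b c (\<lambda>i. p) =
      rho_star g a b c (\<lambda>i. p) + card (box_pairs (q^g) (\<lambda>x1 x2. q dvd x1 \<and> q dvd x2))"
    unfolding rho rho_star card_box_pairs_split[of "q^g" \<Phi> "\<lambda>x1 x2. q dvd x1 \<and> q dvd x2"]
      primitive imprimitive ..
  also have "q^g = q * q^(g-1)" using \<open>g \<ge> 1\<close> power_minus_mult[of g q] by (simp add: mult.commute)
  also have "card (box_pairs (q * q^(g-1)) (\<lambda>x1 x2. q dvd x1 \<and> q dvd x2)) = p^(2*(g-1))"
    using card_box_pairs_common_divisor[OF q0, of "q^(g-1)"] q0
    unfolding q_def by (simp add: nat_power_eq power_mult[symmetric] mult.commute)
  finally show ?thesis .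
qed

(* A primitive common zero of two forms modulo p forces p | R, so rho^* vanishes unless p | R. *)
lemma rho_star_prime_le:
  fixes p g :: nat
  assumes p: "prime p" and "g \<ge> 1" and ij: "i \<in> {1..g}" "j \<in> {1..g}"
    and R: "res_form (a i) (b i) (c i) (a j) (b j) (c j) \<noteq> 0"
  shows "int (rho_star g a b c (\<lambda>i. p)) \<le> \<bar>res_form (a i) (b i) (c i) (a j) (b j) (c j)\<bar>^(2*g-1) * int p"
proof -
  define q where "q = int p"
  define R where "R = res_form (a i) (b i) (c i) (a j) (b j) (c j)"
  define S where "S = box_pairs (q^g) (\<lambda>x1 x2.
      (\<forall>i\<in>{1..g}. q dvd qform (a i) (b i) (c i) x1 x2) \<and> gcd (gcd x1 x2) (q^g) = 1)"
  have q: "prime q" and q0: "q > 0" unfolding q_def using p by (simp_all add: prime_gt_0_nat)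
  have prod: "(\<Prod>i\<in>{1..g}. int p) = q^g" unfolding q_def by simp
  have rho_star: "rho_star g a b c (\<lambda>i. p) = card S"
    unfolding rho_star_eq_card_box_pairs S_def prod q_def by (rule refl)
  show ?thesis
  proof (cases "q dvd R")
    case True
    have "int (card S) \<le> (q^g)^2" unfolding S_def using q0 by (simp add: card_box_pairs_le)
    also have "\<dots> = q^(2*g)" by (rule power_even_eq[symmetric])
    also have "\<dots> = q^(2*g-1) * q" using \<open>g \<ge> 1\<close> power_minus_mult[of "2*g" q] by simp
    also have "\<dots> \<le> \<bar>R\<bar>^(2*g-1) * q"
      using dvd_imp_le_int[OF R[folded R_def] True] q0 by (intro mult_right_mono power_mono) simp_all
    finally show ?thesis unfolding rho_star R_def q_def .
  next
    case False
    have "(x1, x2) \<notin> S" for x1 x2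
    proof
      assume "(x1, x2) \<in> S"
      then have all: "\<forall>i\<in>{1..g}. q dvd qform (a i) (b i) (c i) x1 x2"
        and "gcd (gcd x1 x2) (q^g) = 1" unfolding S_def box_pairs_def by simp_all
      then have prim: "\<not> (q dvd x1 \<and> q dvd x2)" using gcd_prime_power_eq_1_iff[OF q \<open>g \<ge> 1\<close>] by simp
      have "q^1 dvd qform (a i) (b i) (c i) x1 x2" "q^1 dvd qform (a j) (b j) (c j) x1 x2"
        using all ij by simp_all
      then have "q^1 dvd R" unfolding R_def by (rule prime_power_dvd_res_form[OF q prim])
      then show False using False by simp
    qed
    then have "S = {}" by auto
    then show ?thesis unfolding rho_star by simp
  qed
qed

lemma box_pairs_prime_subset:
  fixes q a b c :: int
  assumes q: "prime q" and "\<not> q dvd a"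
  shows "box_pairs q (\<lambda>x1 x2. q dvd qform a b c x1 x2)
    \<subseteq> insert (0, 0) (box_pairs q (\<lambda>y1 y2. \<not> q dvd y2 \<and> q dvd qform a b c y1 y2))"
proof
  fix x assume "x \<in> box_pairs q (\<lambda>x1 x2. q dvd qform a b c x1 x2)"
  then obtain x1 x2 where x: "x = (x1, x2)" and range: "0 \<le> x1" "x1 < q" "0 \<le> x2" "x2 < q"
    and dq: "q dvd qform a b c x1 x2" unfolding box_pairs_def by blast
  show "x \<in> insert (0, 0) (box_pairs q (\<lambda>y1 y2. \<not> q dvd y2 \<and> q dvd qform a b c y1 y2))"
  proof (cases "q dvd x2")
    case True
    then have "x2 = 0" using zdvd_not_zless[of x2 q] range by fastforce
    then have "q dvd a * x1^2" using dq by (simp add: qform_def)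
    then have "q dvd x1" using q \<open>\<not> q dvd a\<close> prime_dvd_power[of q x1 2] by (auto simp: prime_dvd_mult_iff)
    then have "x1 = 0" using zdvd_not_zless[of x1 q] range by fastforce
    with \<open>x2 = 0\<close> show ?thesis unfolding x by simp
  next
    case False
    then show ?thesis using range dq unfolding x box_pairs_def by simp
  qed
qed

lemma card_box_pairs_unit_y2_prime_le:
  fixes q a b c :: int
  assumes q: "prime q" and "\<not> q dvd a"
  shows "int (card (box_pairs q (\<lambda>y1 y2. \<not> q dvd y2 \<and> q dvd qform a b c y1 y2))) \<le> 2 * (q - 1)"
proof -
  define Rt where "Rt = {t \<in> {0..<q}. q dvd a * t^2 + 2 * b * t + c}"
  define U where "U = {y \<in> {0..<q}. \<not> q dvd y}"
  have q0: "q > 0" using q by (simp add: prime_gt_0_int)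
  have "int (card (box_pairs q (\<lambda>y1 y2. \<not> q dvd y2 \<and> q dvd qform a b c y1 y2)))
      \<le> int (card Rt) * int (card U) * (q div q)"
    using card_box_pairs_unit_y2_le[OF q, of 1 q a b c] q0 unfolding Rt_def U_def power_one_right by simp
  also have "\<dots> = int (card Rt) * int (card U)" using q0 by simp
  also have "\<dots> \<le> 2 * (q - 1)"
  proof (rule mult_mono)
    show "int (card Rt) \<le> 2" using card_quadratic_roots_prime_le[OF assms] unfolding Rt_def by simp
    have "card U \<le> card {1..<q}" unfolding U_def by (rule card_mono) (auto simp: le_less)
    then show "int (card U) \<le> q - 1" using q0 by simp
  qed simp_all
  finally show ?thesis .
qed

lemma rho_single_prime_le:
  fixes p :: nat
  assumes p: "prime p" and n: "n \<in> {1..g}" and not_dvd: "\<not> int p dvd a n"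
  shows "rho g a b c (\<lambda>i. p ^ (if i = n then 1 else 0)) \<le> 2 * p"
proof -
  define q where "q = int p"
  define Y where "Y = box_pairs q (\<lambda>y1 y2. \<not> q dvd y2 \<and> q dvd qform (a n) (b n) (c n) y1 y2)"
  have q: "prime q" unfolding q_def using p by simp
  have "(\<Prod>i\<in>{1..g}. int (p ^ (if i = n then 1 else 0))) = (\<Prod>i\<in>{1..g}. if i = n then q else 1)"
    by (rule prod.cong) (simp_all add: q_def)
  also have "\<dots> = q" using n by (simp add: prod.delta)
  finally have prod: "(\<Prod>i\<in>{1..g}. int (p ^ (if i = n then 1 else 0))) = q" .
  have "rho g a b c (\<lambda>i. p ^ (if i = n then 1 else 0))
      \<le> card (box_pairs q (\<lambda>x1 x2. q dvd qform (a n) (b n) (c n) x1 x2))"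
    unfolding rho_eq_card_box_pairs prod
  proof (rule card_box_pairs_mono)
    fix x1 x2
    assume "\<forall>i\<in>{1..g}. int (p ^ (if i = n then 1 else 0)) dvd qform (a i) (b i) (c i) x1 x2"
    then have "int (p ^ (if n = n then 1 else 0)) dvd qform (a n) (b n) (c n) x1 x2" using n by blast
    then show "q dvd qform (a n) (b n) (c n) x1 x2" by (simp add: q_def)
  qed
  also have "\<dots> \<le> card (insert (0, 0) Y)"
    using not_dvd unfolding Y_def q_def[symmetric] by (intro card_mono box_pairs_prime_subset[OF q]) simp_all
  also have "\<dots> \<le> card Y + 1" by (simp add: card_insert_le_m1 Y_def)
  also have "\<dots> \<le> 2 * p"
  proof -
    have "int (card Y) \<le> 2 * (int p - 1)"
      using card_box_pairs_unit_y2_prime_le[OF q] not_dvd unfolding Y_def q_def by blast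
    then show ?thesis by simp
  qed
  finally show ?thesis .
qed

lemma rho_prime_near_main_term:
  fixes g :: nat and a b c :: "nat \<Rightarrow> int"
  assumes g: "g \<ge> 2" and R: "res_form (a 1) (b 1) (c 1) (a 2) (b 2) (c 2) \<noteq> 0"
  shows "\<exists>C :: real. \<forall>p::nat. prime p \<longrightarrow>
           \<bar>real (rho g a b c (\<lambda>i. p)) - real p ^ (2 * (g - 1))\<bar> \<le> C * real p"
proof (intro exI[of _ "real_of_int (\<bar>res_form (a 1) (b 1) (c 1) (a 2) (b 2) (c 2)\<bar>^(2*g-1))"] allI impI)
  fix p :: nat assume p: "prime p"
  have "real (rho g a b c (\<lambda>i. p)) - real p ^ (2 * (g - 1)) = real_of_int (int (rho_star g a b c (\<lambda>i. p)))"
    using rho_prime_eq_rho_star_plus[OF p, of g a b c] g by simp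
  also have "\<dots> \<le> real_of_int (\<bar>res_form (a 1) (b 1) (c 1) (a 2) (b 2) (c 2)\<bar>^(2*g-1) * int p)"
    using rho_star_prime_le[OF p _ _ _ R] g by (intro of_int_le_iff[THEN iffD2]) simp
  finally show "\<bar>real (rho g a b c (\<lambda>i. p)) - real p ^ (2 * (g - 1))\<bar>
      \<le> real_of_int (\<bar>res_form (a 1) (b 1) (c 1) (a 2) (b 2) (c 2)\<bar>^(2*g-1)) * real p"
    using rho_prime_eq_rho_star_plus[OF p, of g a b c] g by simp
qed

lemma finite_primes_rho_single_gt:
  fixes g :: nat and a b c :: "nat \<Rightarrow> int"
  assumes nz: "\<forall>k\<in>{1..g}. a k \<noteq> 0"
  shows "finite {p::nat. prime p \<and>
           \<not> (\<forall>n\<in>{1..g}. rho g a b c (\<lambda>i. p ^ (if i = n then 1 else 0)) \<le> 2 * p)}"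
proof (rule finite_subset)
  show "{p::nat. prime p \<and> \<not> (\<forall>n\<in>{1..g}. rho g a b c (\<lambda>i. p ^ (if i = n then 1 else 0)) \<le> 2 * p)}
      \<subseteq> (\<Union>n\<in>{1..g}. {..nat \<bar>a n\<bar>})"
  proof
    fix p assume "p \<in> {p::nat. prime p \<and>
        \<not> (\<forall>n\<in>{1..g}. rho g a b c (\<lambda>i. p ^ (if i = n then 1 else 0)) \<le> 2 * p)}"
    then obtain n where p: "prime p" and n: "n \<in> {1..g}"
      and "\<not> rho g a b c (\<lambda>i. p ^ (if i = n then 1 else 0)) \<le> 2 * p" by blast
    then have "int p dvd a n" using rho_single_prime_le by blast
    then have "int p \<le> \<bar>a n\<bar>" using dvd_imp_le_int[of "a n" "int p"] nz n by auto
    then show "p \<in> (\<Union>n\<in>{1..g}. {..nat \<bar>a n\<bar>})" using n by force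
  qed
qed simp

section \<open>Densities at prime powers\<close>

lemma rho_prime_powers_le_two_forms:
  fixes p :: nat and e :: "nat \<Rightarrow> nat"
  assumes p: "prime p" and fh: "f \<in> {1..g}" "h \<in> {1..g}" and "e h \<le> e f"
    and "a f \<noteq> 0" "c f \<noteq> 0" "disc_form (a f) (b f) (c f) \<noteq> 0"
    and "res_form (a f) (b f) (c f) (a h) (b h) (c h) \<noteq> 0"
  shows "int (rho g a b c (\<lambda>i. p ^ e i))
    \<le> (1 + (\<bar>res_form (a f) (b f) (c f) (a h) (b h) (c h)\<bar> + 2)
          * (\<bar>disc_form (a f) (b f) (c f)\<bar> * (2 + \<bar>a f\<bar> + \<bar>c f\<bar>)))
        * int (e f - e h + 1) * int p ^ (2 * (\<Sum>i\<in>{1..g}. e i) - e f)"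
proof -
  have prod: "(\<Prod>i\<in>{1..g}. int (p ^ e i)) = int p ^ (\<Sum>i\<in>{1..g}. e i)" by (simp add: power_sum)
  have "rho g a b c (\<lambda>i. p ^ e i) \<le> card (box_pairs (int p ^ (\<Sum>i\<in>{1..g}. e i))
     (\<lambda>x1 x2. int p ^ e f dvd qform (a f) (b f) (c f) x1 x2 \<and> int p ^ e h dvd qform (a h) (b h) (c h) x1 x2))"
    unfolding rho_eq_card_box_pairs prod
    by (intro card_box_pairs_mono) (use fh in \<open>auto simp flip: of_nat_power\<close>)
  then have "int (rho g a b c (\<lambda>i. p ^ e i)) \<le> int (card (box_pairs (int p ^ (\<Sum>i\<in>{1..g}. e i))
     (\<lambda>x1 x2. int p ^ e f dvd qform (a f) (b f) (c f) x1 x2 \<and> int p ^ e h dvd qform (a h) (b h) (c h) x1 x2)))"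
    by (rule of_nat_mono)
  also have "\<dots> \<le> (1 + (\<bar>res_form (a f) (b f) (c f) (a h) (b h) (c h)\<bar> + 2)
          * (\<bar>disc_form (a f) (b f) (c f)\<bar> * (2 + \<bar>a f\<bar> + \<bar>c f\<bar>)))
        * int (e f - e h + 1) * int p ^ (2 * (\<Sum>i\<in>{1..g}. e i) - e f)"
    using p assms(4-8) member_le_sum[OF fh(1), of e] by (intro card_box_pairs_two_forms_le) auto
  finally show ?thesis .
qed

lemma sum_permutes_split_last:
  fixes e :: "nat \<Rightarrow> nat"
  assumes "\<sigma> permutes {1..g}" "g \<ge> 1"
  shows "(\<Sum>i\<in>{1..g}. e i) = (\<Sum>k\<in>{1..g-1}. e (\<sigma> k)) + e (\<sigma> g)"
proof -
  have "(\<Sum>i\<in>{1..g}. e i) = (\<Sum>k\<in>{1..Suc (g-1)}. e (\<sigma> k))"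
    using sum.permute[OF assms(1), of e] assms(2) by (simp add: comp_def)
  also have "\<dots> = (\<Sum>k\<in>{1..g-1}. e (\<sigma> k)) + e (\<sigma> (Suc (g-1)))" by simp
  finally show ?thesis using assms(2) by simp
qed

lemma rho_prime_powers_le:
  fixes g :: nat and a b c :: "nat \<Rightarrow> int"
  assumes g: "g \<ge> 2"
    and nz: "\<forall>k\<in>{1..g}. a k \<noteq> 0 \<and> c k \<noteq> 0 \<and> disc_form (a k) (b k) (c k) \<noteq> 0"
    and res: "\<forall>i\<in>{1..g}. \<forall>j\<in>{1..g}. i \<noteq> j \<longrightarrow> res_form (a i) (b i) (c i) (a j) (b j) (c j) \<noteq> 0"
  shows "\<exists>C :: real. \<forall>(p::nat) (e::nat \<Rightarrow> nat) \<sigma>.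
        prime p \<longrightarrow> \<sigma> permutes {1..g} \<longrightarrow>
        (\<forall>i j. 1 \<le> i \<longrightarrow> i \<le> j \<longrightarrow> j \<le> g \<longrightarrow> e (\<sigma> i) \<le> e (\<sigma> j)) \<longrightarrow>
        real (rho g a b c (\<lambda>i. p ^ e i))
          \<le> C * real (e (\<sigma> g) - e (\<sigma> (g - 1)) + 1)
              * real p ^ (2 * (\<Sum>k\<in>{1..g-1}. e (\<sigma> k)) + e (\<sigma> g))"
proof -
  define C where "C f h = 1 + (\<bar>res_form (a f) (b f) (c f) (a h) (b h) (c h)\<bar> + 2)
      * (\<bar>disc_form (a f) (b f) (c f)\<bar> * (2 + \<bar>a f\<bar> + \<bar>c f\<bar>))" for f h
  define C0 where "C0 = (\<Sum>f\<in>{1..g}. \<Sum>h\<in>{1..g}. C f h)"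
  have C_nonneg: "C f h \<ge> 0" for f h unfolding C_def by (intro add_nonneg_nonneg mult_nonneg_nonneg) auto
  have C_le: "C f h \<le> C0" if "f \<in> {1..g}" "h \<in> {1..g}" for f h
  proof -
    have "C f h \<le> (\<Sum>h\<in>{1..g}. C f h)" by (rule member_le_sum) (use that C_nonneg in auto)
    also have "\<dots> \<le> C0" unfolding C0_def
      by (rule member_le_sum[of f]) (use that C_nonneg in \<open>auto intro: sum_nonneg\<close>)
    finally show ?thesis .
  qed
  show ?thesis
  proof (intro exI[of _ "real_of_int C0"] allI impI)
    fix p :: nat and e :: "nat \<Rightarrow> nat" and \<sigma>
    assume p: "prime p" and \<sigma>: "\<sigma> permutes {1..g}"
      and mono: "\<forall>i j. 1 \<le> i \<longrightarrow> i \<le> j \<longrightarrow> j \<le> g \<longrightarrow> e (\<sigma> i) \<le> e (\<sigma> j)"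
    define f where "f = \<sigma> g"
    define h where "h = \<sigma> (g - 1)"
    have fh: "f \<in> {1..g}" "h \<in> {1..g}" "f \<noteq> h"
      unfolding f_def h_def using permutes_in_image[OF \<sigma>] permutes_inj[OF \<sigma>] g
      by (auto dest: injD)
    have "e h \<le> e f" unfolding f_def h_def using mono g by simp
    have "int (rho g a b c (\<lambda>i. p ^ e i))
        \<le> C f h * int (e f - e h + 1) * int p ^ (2 * (\<Sum>i\<in>{1..g}. e i) - e f)"
      unfolding C_def using nz res fh \<open>e h \<le> e f\<close> by (intro rho_prime_powers_le_two_forms[OF p]) auto
    also have "\<dots> \<le> C0 * int (e f - e h + 1) * int p ^ (2 * (\<Sum>i\<in>{1..g}. e i) - e f)"
      using C_le[OF fh(1,2)] by (intro mult_right_mono) simp_all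
    finally have "real_of_int (int (rho g a b c (\<lambda>i. p ^ e i)))
        \<le> real_of_int (C0 * int (e f - e h + 1) * int p ^ (2 * (\<Sum>i\<in>{1..g}. e i) - e f))"
      by (rule of_int_le_iff[THEN iffD2])
    moreover have "2 * (\<Sum>i\<in>{1..g}. e i) - e f = 2 * (\<Sum>k\<in>{1..g-1}. e (\<sigma> k)) + e f"
      unfolding f_def using sum_permutes_split_last[OF \<sigma>] g by simp
    ultimately show "real (rho g a b c (\<lambda>i. p ^ e i))
        \<le> real_of_int C0 * real (e (\<sigma> g) - e (\<sigma> (g - 1)) + 1)
          * real p ^ (2 * (\<Sum>k\<in>{1..g-1}. e (\<sigma> k)) + e (\<sigma> g))"
      unfolding f_def h_def by simp
  qed
qed

lemma nonvanishing_of_D: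
  fixes g :: nat and a b c :: "nat \<Rightarrow> int"
  assumes "X * (\<Prod>k\<in>{1..g}. a k * c k * disc_form (a k) (b k) (c k))
             * (\<Prod>(i, j)\<in>{(i, j). 1 \<le> i \<and> i < j \<and> j \<le> g}.
                  res_form (a i) (b i) (c i) (a j) (b j) (c j)) \<noteq> 0"
  shows "\<forall>k\<in>{1..g}. a k \<noteq> 0 \<and> c k \<noteq> 0 \<and> disc_form (a k) (b k) (c k) \<noteq> 0"
    and "\<forall>i\<in>{1..g}. \<forall>j\<in>{1..g}. i \<noteq> j \<longrightarrow> res_form (a i) (b i) (c i) (a j) (b j) (c j) \<noteq> 0"
proof -
  have "finite {(i, j). 1 \<le> i \<and> i < j \<and> j \<le> g}"
    by (rule finite_subset[of _ "{1..g} \<times> {1..g}"]) auto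
  then have res: "res_form (a i) (b i) (c i) (a j) (b j) (c j) \<noteq> 0" if "1 \<le> i" "i < j" "j \<le> g" for i j
    using assms that by (auto simp: prod_zero_iff)
  show "\<forall>k\<in>{1..g}. a k \<noteq> 0 \<and> c k \<noteq> 0 \<and> disc_form (a k) (b k) (c k) \<noteq> 0"
    using assms by (auto simp: prod_zero_iff)
  show "\<forall>i\<in>{1..g}. \<forall>j\<in>{1..g}. i \<noteq> j \<longrightarrow> res_form (a i) (b i) (c i) (a j) (b j) (c j) \<noteq> 0"
  proof (intro ballI impI)
    fix i j assume "i \<in> {1..g}" "j \<in> {1..g}" "i \<noteq> j"
    then consider "1 \<le> i" "i < j" "j \<le> g" | "1 \<le> j" "j < i" "i \<le> g" by fastforce
    then show "res_form (a i) (b i) (c i) (a j) (b j) (c j) \<noteq> 0"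
      by cases (use res res_form_commute in metis)+
  qed
qed

theorem lemma2p4:
  fixes g :: nat and a b c :: "nat \<Rightarrow> int"
  assumes hg: "g \<ge> 2"
    and hirr: "\<forall>i\<in>{1..g}. irreducible_form (a i) (b i) (c i)"
    and ha: "\<forall>i\<in>{1..g}. [a i = 1] (mod 4)"
    and hD: "(\<Prod>p\<in>{p::nat. prime p \<and> p \<le> 2 * g}. int p)
             * (\<Prod>k\<in>{1..g}. a k * c k * disc_form (a k) (b k) (c k))
             * (\<Prod>(i, j)\<in>{(i, j). 1 \<le> i \<and> i < j \<and> j \<le> g}.
                  res_form (a i) (b i) (c i) (a j) (b j) (c j)) \<noteq> 0"
  shows
    "(\<exists>C :: real. \<forall>(p::nat) (e::nat \<Rightarrow> nat) \<sigma>.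
        prime p \<longrightarrow> \<sigma> permutes {1..g} \<longrightarrow>
        (\<forall>i j. 1 \<le> i \<longrightarrow> i \<le> j \<longrightarrow> j \<le> g \<longrightarrow> e (\<sigma> i) \<le> e (\<sigma> j)) \<longrightarrow>
        real (rho g a b c (\<lambda>i. p ^ e i))
          \<le> C * real (e (\<sigma> g) - e (\<sigma> (g - 1)) + 1)
              * real p ^ (2 * (\<Sum>k\<in>{1..g-1}. e (\<sigma> k)) + e (\<sigma> g)))
     \<and> (\<forall>p::nat. prime p \<longrightarrow>
          rho g a b c (\<lambda>i. p) = rho_star g a b c (\<lambda>i. p) + p ^ (2 * (g - 1)))
     \<and> (\<exists>C :: real. \<forall>p::nat. prime p \<longrightarrow>
          \<bar>real (rho g a b c (\<lambda>i. p)) - real p ^ (2 * (g - 1))\<bar> \<le> C * real p)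
     \<and> finite {p::nat. prime p \<and>
          \<not> (\<forall>n\<in>{1..g}. rho g a b c (\<lambda>i. p ^ (if i = n then 1 else 0)) \<le> 2 * p)}"
proof -
  have nz: "\<forall>k\<in>{1..g}. a k \<noteq> 0 \<and> c k \<noteq> 0 \<and> disc_form (a k) (b k) (c k) \<noteq> 0"
    and res: "\<forall>i\<in>{1..g}. \<forall>j\<in>{1..g}. i \<noteq> j \<longrightarrow> res_form (a i) (b i) (c i) (a j) (b j) (c j) \<noteq> 0"
    using nonvanishing_of_D[OF hD] by blast+
  have R12: "res_form (a 1) (b 1) (c 1) (a 2) (b 2) (c 2) \<noteq> 0" using res hg by simp
  show ?thesis
  proof (intro conjI)
    show "\<forall>p. prime p \<longrightarrow> rho g a b c (\<lambda>i. p) = rho_star g a b c (\<lambda>i. p) + p ^ (2 * (g - 1))"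
      using rho_prime_eq_rho_star_plus hg by simp
    show "finite {p. prime p \<and> \<not> (\<forall>n\<in>{1..g}. rho g a b c (\<lambda>i. p ^ (if i = n then 1 else 0)) \<le> 2 * p)}"
      using nz by (intro finite_primes_rho_single_gt) simp
  qed (fact rho_prime_powers_le[OF hg nz res], fact rho_prime_near_main_term[OF hg R12])
qed

end
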